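(* Let $n\ge 1$, $m\ge 1$, and suppose: each $u_x$ ($x=1,\dots,m$) is concave and differentiable; $c$ is convex and differentiable; and at least one of the following holds: (a) all but at most one of the $u_x$ are strictly concave, or (b) $c$ is strictly convex. Then the potential function $$\Phi(\mathbf{s})=\sum_{x=1}^m\left[\left(1-\frac1n\right)\int_0^{s_x}\frac{u_x(t)}{t}\,\mathrm{d}t+\frac1n u_x(s_x)\right]-n\,c(\mathbf{s}/n)$$ is strictly concave on $n\Delta^{m-1}=\{\mathbf{s}\in\mathbb{R}^m:\mathbf{s}\ge0,\ \sum_x s_x=n\}$.
   Context: Here $\Delta^{m-1}=\{\mathbf{v}\in\mathbb{R}^m:\mathbf{v}\ge 0,\ \mathbf{v}^{T}\mathbf{1}=1\}$; for each $x\in\{1,\dots,m\}$, $u_x:\mathbb{R}_{\ge 0}\to\mathbb{R}_{\ge 0}$ satisfies $u_x(0)=0$; and $c:\Delta^{m-1}\to\mathbb{R}_{\ge 0}$. *)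

theory Defs
  imports "HOL-Analysis.Analysis"
begin

definition strict_convex_on :: "'a::real_vector set \<Rightarrow> ('a \<Rightarrow> real) \<Rightarrow> bool" where
  "strict_convex_on S f \<longleftrightarrow> convex S \<and>
     (\<forall>x\<in>S. \<forall>y\<in>S. x \<noteq> y \<longrightarrow> (\<forall>t::real. 0 < t \<and> t < 1 \<longrightarrow>
        f ((1 - t) *\<^sub>R x + t *\<^sub>R y) < (1 - t) * f x + t * f y))"

definition strict_concave_on :: "'a::real_vector set \<Rightarrow> ('a \<Rightarrow> real) \<Rightarrow> bool" where
  "strict_concave_on S f \<longleftrightarrow> strict_convex_on S (\<lambda>x. - f x)"

definition std_simplex :: "(real^'m) set" where
  "std_simplex = {v. (\<forall>i. 0 \<le> v $ i) \<and> (\<Sum>i\<in>UNIV. v $ i) = 1}"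

definition scaled_simplex :: "real \<Rightarrow> (real^'m) set" where
  "scaled_simplex a = {s. (\<forall>i. 0 \<le> s $ i) \<and> (\<Sum>i\<in>UNIV. s $ i) = a}"

definition potential :: "nat \<Rightarrow> ('m \<Rightarrow> real \<Rightarrow> real) \<Rightarrow> (real^'m \<Rightarrow> real) \<Rightarrow> real^'m \<Rightarrow> real" where
  "potential n u c s =
     (\<Sum>x\<in>UNIV. (1 - 1 / real n) * integral {0..s $ x} (\<lambda>t. u x t / t)
               + (1 / real n) * u x (s $ x))
     - real n * c ((1 / real n) *\<^sub>R s)"

end

theory Submission
  imports Defs
begin

text \<open>Write \<open>\<Phi>(s) = (\<Sum>x. h\<^sub>x(s\<^sub>x)) - n c(s/n)\<close> with
  \<open>h\<^sub>x(p) = (1 - 1/n) \<integral>\<^sub>0\<^sup>p u\<^sub>x(t)/t dt + u\<^sub>x(p)/n\<close>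
  (\<open>coordinate_potential n u\<^sub>x\<close> below).
  Since \<open>u\<^sub>x\<close> is concave with \<open>u\<^sub>x(0) = 0\<close>, the slope \<open>u\<^sub>x(t)/t\<close> is nonincreasing and
  bounded by \<open>u\<^sub>x'(0)\<close>, so its primitive is concave; hence every \<open>h\<^sub>x\<close> is concave, and
  strictly concave when \<open>u\<^sub>x\<close> is. The term \<open>-n c(s/n)\<close> is concave, strictly so when \<open>c\<close> is
  strictly convex. Otherwise strictness comes from the sum: two distinct points of \<open>n\<Delta>\<close> have
  the same coordinate sum, so they differ in at least two coordinates, and one of these carries a
  strictly concave \<open>h\<^sub>x\<close>.\<close>

lemma strict_convex_onI:
  assumes "convex S"
    and "\<And>x y t. x \<in> S \<Longrightarrow> y \<in> S \<Longrightarrow> x \<noteq> y \<Longrightarrow> 0 < t \<Longrightarrow> t < 1 \<Longrightarrow>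
      f ((1 - t) *\<^sub>R x + t *\<^sub>R y) < (1 - t) * f x + t * f y"
  shows "strict_convex_on S f"
  using assms unfolding strict_convex_on_def by blast

lemma strict_convex_onD:
  assumes "strict_convex_on S f" "x \<in> S" "y \<in> S" "x \<noteq> y" "0 < t" "t < 1"
  shows "f ((1 - t) *\<^sub>R x + t *\<^sub>R y) < (1 - t) * f x + t * f y"
  using assms unfolding strict_convex_on_def by blast

lemma strict_concave_onI:
  assumes "convex S"
    and "\<And>x y t. x \<in> S \<Longrightarrow> y \<in> S \<Longrightarrow> x \<noteq> y \<Longrightarrow> 0 < t \<Longrightarrow> t < 1 \<Longrightarrow>
      (1 - t) * f x + t * f y < f ((1 - t) *\<^sub>R x + t *\<^sub>R y)"
  shows "strict_concave_on S f"
  unfolding strict_concave_on_def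
proof (rule strict_convex_onI[OF assms(1)])
  fix x y and t :: real
  assume "x \<in> S" "y \<in> S" "x \<noteq> y" "0 < t" "t < 1"
  then have "(1 - t) * f x + t * f y < f ((1 - t) *\<^sub>R x + t *\<^sub>R y)"
    by (rule assms(2))
  then show "- f ((1 - t) *\<^sub>R x + t *\<^sub>R y) < (1 - t) * - f x + t * - f y"
    by simp
qed

lemma strict_concave_onD:
  assumes "strict_concave_on S f" "x \<in> S" "y \<in> S" "x \<noteq> y" "0 < t" "t < 1"
  shows "(1 - t) * f x + t * f y < f ((1 - t) *\<^sub>R x + t *\<^sub>R y)"
  using strict_convex_onD[of S "\<lambda>x. - f x"] assms unfolding strict_concave_on_def by fastforce

lemma strict_concave_on_cmul:
  assumes "0 < c" "strict_concave_on S f"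
  shows "strict_concave_on S (\<lambda>x. c * f x)"
proof (rule strict_concave_onI)
  show "convex S"
    using assms(2) by (simp add: strict_concave_on_def strict_convex_on_def)
  fix x y and t :: real assume "x \<in> S" "y \<in> S" "x \<noteq> y" "0 < t" "t < 1"
  then have "c * ((1 - t) * f x + t * f y) < c * f ((1 - t) *\<^sub>R x + t *\<^sub>R y)"
    using assms strict_concave_onD by simp
  then show "(1 - t) * (c * f x) + t * (c * f y) < c * f ((1 - t) *\<^sub>R x + t *\<^sub>R y)"
    by (simp add: algebra_simps)
qed

lemma strict_concave_on_add:
  assumes f: "concave_on S f" and g: "concave_on S g"
    and strict: "strict_concave_on S f \<or> strict_concave_on S g"
  shows "strict_concave_on S (\<lambda>x. f x + g x)"
proof (rule strict_concave_onI)
  show "convex S"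
    using f by (rule concave_on_imp_convex)
  fix x y and t :: real assume "x \<in> S" "y \<in> S" "x \<noteq> y" "0 < t" "t < 1"
  then have "(1 - t) * f x + t * f y \<le> f ((1 - t) *\<^sub>R x + t *\<^sub>R y)"
    and "(1 - t) * g x + t * g y \<le> g ((1 - t) *\<^sub>R x + t *\<^sub>R y)"
    and "(1 - t) * f x + t * f y < f ((1 - t) *\<^sub>R x + t *\<^sub>R y)
      \<or> (1 - t) * g x + t * g y < g ((1 - t) *\<^sub>R x + t *\<^sub>R y)"
    using concave_onD[OF f] concave_onD[OF g] strict
      strict_concave_onD[of S f x y t] strict_concave_onD[of S g x y t] by auto
  then show "(1 - t) * (f x + g x) + t * (f y + g y)
      < f ((1 - t) *\<^sub>R x + t *\<^sub>R y) + g ((1 - t) *\<^sub>R x + t *\<^sub>R y)"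
    unfolding distrib_left by linarith
qed

lemma convex_on_rescale:
  fixes f :: "'a::real_vector \<Rightarrow> real"
  assumes f: "convex_on S f" and r: "0 < r"
  shows "convex_on ((*\<^sub>R) r ` S) (\<lambda>x. r * f ((1 / r) *\<^sub>R x))"
proof (rule convex_onI)
  show "convex ((*\<^sub>R) r ` S)"
    using f convex_on_imp_convex convex_scaling by blast
  fix t :: real and x y assume t: "0 < t" "t < 1" and "x \<in> (*\<^sub>R) r ` S" "y \<in> (*\<^sub>R) r ` S"
  then obtain a b where ab: "a \<in> S" "b \<in> S" and xy: "x = r *\<^sub>R a" "y = r *\<^sub>R b"
    by blast
  have "f ((1 - t) *\<^sub>R a + t *\<^sub>R b) \<le> (1 - t) * f a + t * f b"
    using convex_onD[OF f] ab t by simp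
  moreover have "(1 / r) *\<^sub>R ((1 - t) *\<^sub>R x + t *\<^sub>R y) = (1 - t) *\<^sub>R a + t *\<^sub>R b"
    using r by (simp add: xy scaleR_add_right)
  ultimately have "r * f ((1 / r) *\<^sub>R ((1 - t) *\<^sub>R x + t *\<^sub>R y)) \<le> r * ((1 - t) * f a + t * f b)"
    using r by simp
  then show "r * f ((1 / r) *\<^sub>R ((1 - t) *\<^sub>R x + t *\<^sub>R y))
      \<le> (1 - t) * (r * f ((1 / r) *\<^sub>R x)) + t * (r * f ((1 / r) *\<^sub>R y))"
    using r by (simp add: xy algebra_simps)
qed

lemma strict_convex_on_rescale:
  fixes f :: "'a::real_vector \<Rightarrow> real"
  assumes f: "strict_convex_on S f" and r: "0 < r"
  shows "strict_convex_on ((*\<^sub>R) r ` S) (\<lambda>x. r * f ((1 / r) *\<^sub>R x))"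
proof (rule strict_convex_onI)
  show "convex ((*\<^sub>R) r ` S)"
    using f convex_scaling unfolding strict_convex_on_def by blast
  fix t :: real and x y assume "x \<in> (*\<^sub>R) r ` S" "y \<in> (*\<^sub>R) r ` S" "x \<noteq> y" and t: "0 < t" "t < 1"
  then obtain a b where ab: "a \<in> S" "b \<in> S" "a \<noteq> b" and xy: "x = r *\<^sub>R a" "y = r *\<^sub>R b"
    by blast
  have "f ((1 - t) *\<^sub>R a + t *\<^sub>R b) < (1 - t) * f a + t * f b"
    using strict_convex_onD[OF f] ab t by simp
  moreover have "(1 / r) *\<^sub>R ((1 - t) *\<^sub>R x + t *\<^sub>R y) = (1 - t) *\<^sub>R a + t *\<^sub>R b"
    using r by (simp add: xy scaleR_add_right)
  ultimately have "r * f ((1 / r) *\<^sub>R ((1 - t) *\<^sub>R x + t *\<^sub>R y)) < r * ((1 - t) * f a + t * f b)"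
    using r by simp
  then show "r * f ((1 / r) *\<^sub>R ((1 - t) *\<^sub>R x + t *\<^sub>R y))
      < (1 - t) * (r * f ((1 / r) *\<^sub>R x)) + t * (r * f ((1 / r) *\<^sub>R y))"
    using r by (simp add: xy algebra_simps)
qed

lemma concave_slope_antimono:
  fixes f :: "real \<Rightarrow> real"
  assumes "concave_on {0..} f" "f 0 = 0" "0 < a" "a \<le> b"
  shows "f b / b \<le> f a / a"
proof -
  have "(a/b) * f b \<le> f a"
    using concave_onD[OF assms(1), of "a/b" 0 b] assms by simp
  then show ?thesis
    using assms by (simp add: field_simps)
qed

lemma concave_slope_le_deriv:
  fixes f :: "real \<Rightarrow> real"
  assumes "concave_on {0..} f" "f 0 = 0" "(f has_real_derivative D) (at 0 within {0..})" "0 < t"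
  shows "f t / t \<le> D"
proof (rule tendsto_le[OF trivial_limit_at_right_real])
  show "((\<lambda>y. f y / y) \<longlongrightarrow> D) (at_right 0)"
    using assms(2,3) unfolding has_field_derivative_iff at_within_Ici_at_right by simp
  show "\<forall>\<^sub>F y in at_right 0. f t / t \<le> f y / y"
    unfolding eventually_at_right_field
    using assms concave_slope_antimono[OF assms(1,2)] by (intro exI[of _ t]) auto
qed simp

lemma integrable_on_antimono_on:
  fixes G :: "real \<Rightarrow> real"
  assumes "antimono_on {a..b} G"
  shows "G integrable_on {a..b}"
proof -
  have "mono_on {a..b} (\<lambda>x. - G x)"
    by (intro mono_onI) (use monotone_onD[OF assms] in force)
  then show ?thesis
    using integrable_neg integrable_on_mono_on by fastforce
qed

lemma concave_on_integral_antimono: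
  fixes G :: "real \<Rightarrow> real"
  assumes G: "antimono_on {a..} G"
  shows "concave_on {a..} (\<lambda>x. integral {a..x} G)"
proof (rule concave_on_linorderI)
  show "convex {a..}"
    by simp
  fix t x y :: real
  assume t: "0 < t" "t < 1" and xy: "x \<in> {a..}" "y \<in> {a..}" "x < y"
  define m where "m = (1 - t) * x + t * y"
  have m: "m - x = t * (y - x)" "y - m = (1 - t) * (y - x)"
    unfolding m_def by (simp_all add: algebra_simps)
  then have "x \<le> m" "m \<le> y"
    using t xy by (metis diff_ge_0_iff_ge less_eq_real_def mult_nonneg_nonneg)+
  have int: "G integrable_on {p..q}" if "a \<le> p" for p q
    using G that by (intro integrable_on_antimono_on) (auto elim: monotone_on_subset)
  have split_m: "integral {a..m} G = integral {a..x} G + integral {x..m} G"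
    using xy \<open>x \<le> m\<close> int[of a m]
    by (simp add: Henstock_Kurzweil_Integration.integral_combine)
  have split_y: "integral {a..y} G = integral {a..m} G + integral {m..y} G"
    using xy \<open>x \<le> m\<close> \<open>m \<le> y\<close> int[of a y]
    by (simp add: Henstock_Kurzweil_Integration.integral_combine)
  text \<open>\<open>G m\<close> bounds the average of \<open>G\<close> on \<open>[x, m]\<close> from below and on \<open>[m, y]\<close> from above,
    and the lengths of these intervals are in the ratio \<open>t : 1 - t\<close>.\<close>
  have "(m - x) * G m = integral {x..m} (\<lambda>_. G m)"
    using \<open>x \<le> m\<close> by simp
  also have "\<dots> \<le> integral {x..m} G"
    using int xy monotone_onD[OF G] by (intro integral_le) auto
  finally have lower: "(m - x) * G m \<le> integral {x..m} G" .
  have "integral {m..y} G \<le> integral {m..y} (\<lambda>_. G m)"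
    using int xy \<open>x \<le> m\<close> monotone_onD[OF G] by (intro integral_le) auto
  also have "\<dots> = (y - m) * G m"
    using \<open>m \<le> y\<close> by simp
  finally have upper: "integral {m..y} G \<le> (y - m) * G m" .
  have "t * integral {m..y} G \<le> t * ((y - m) * G m)"
    using upper t by (simp add: mult_left_mono)
  also have "\<dots> = (1 - t) * ((m - x) * G m)"
    unfolding m by simp
  also have "\<dots> \<le> (1 - t) * integral {x..m} G"
    using lower t by (simp add: mult_left_mono)
  finally have "t * integral {m..y} G \<le> (1 - t) * integral {x..m} G" .
  then show "(1 - t) * integral {a..x} G + t * integral {a..y} G
      \<le> integral {a..(1 - t) *\<^sub>R x + t *\<^sub>R y} G"
    using split_m split_y by (simp add: m_def algebra_simps)
qed

lemma concave_on_integral_slope: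
  fixes f :: "real \<Rightarrow> real"
  assumes conc: "concave_on {0..} f" and f0: "f 0 = 0"
    and diff: "f differentiable (at 0 within {0..})"
  shows "concave_on {0..} (\<lambda>x. integral {0..x} (\<lambda>t. f t / t))"
proof -
  obtain D where D: "(f has_real_derivative D) (at 0 within {0..})"
    using diff real_differentiable_def by blast
  define G where "G t = (if t = 0 then D else f t / t)" for t
  have "antimono_on {0..} G"
    using concave_slope_le_deriv[OF conc f0 D] concave_slope_antimono[OF conc f0]
    by (intro monotone_onI) (auto simp: G_def)
  then have "concave_on {0..} (\<lambda>x. integral {0..x} G)"
    by (rule concave_on_integral_antimono)
  moreover have "integral {0..x} (\<lambda>t. f t / t) = integral {0..x} G" for x
    by (rule integral_spike[of "{0}"]) (auto simp: G_def)
  ultimately show ?thesis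
    by simp
qed

definition coordinate_potential :: "nat \<Rightarrow> (real \<Rightarrow> real) \<Rightarrow> real \<Rightarrow> real" where
  "coordinate_potential n f p = (1 - 1 / real n) * integral {0..p} (\<lambda>t. f t / t) + 1 / real n * f p"

lemma potential_eq_coordinate_potential:
  "potential n u c = (\<lambda>s. (\<Sum>x\<in>UNIV. coordinate_potential n (u x) (s $ x))
     + - (real n * c ((1 / real n) *\<^sub>R s)))"
  by (simp add: fun_eq_iff potential_def coordinate_potential_def)

lemma concave_on_coordinate_potential:
  fixes f :: "real \<Rightarrow> real"
  assumes "1 \<le> n" "concave_on {0..} f" "f 0 = 0" "f differentiable (at 0 within {0..})"
  shows "concave_on {0..} (coordinate_potential n f)"
  unfolding coordinate_potential_def using assms
  by (intro concave_on_add concave_on_cmul concave_on_integral_slope) auto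

lemma strict_concave_on_coordinate_potential:
  fixes f :: "real \<Rightarrow> real"
  assumes "1 \<le> n" "concave_on {0..} f" "f 0 = 0" "f differentiable (at 0 within {0..})"
    and "strict_concave_on {0..} f"
  shows "strict_concave_on {0..} (coordinate_potential n f)"
  unfolding coordinate_potential_def using assms
  by (intro strict_concave_on_add concave_on_cmul concave_on_integral_slope
      strict_concave_on_cmul disjI2) auto

lemma convex_scaled_simplex: "convex (scaled_simplex a :: (real^'m::finite) set)"
  unfolding convex_def scaled_simplex_def
  by (auto simp: sum.distrib sum_distrib_left[symmetric]) (metis distrib_right mult_1)

lemma scaled_simplex_eq_scaleR_std_simplex:
  assumes "0 < r"
  shows "scaled_simplex r = (*\<^sub>R) r ` (std_simplex :: (real^'m::finite) set)"
proof (intro set_eqI iffI)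
  fix s :: "real^'m" assume s: "s \<in> scaled_simplex r"
  have "(\<Sum>i\<in>UNIV. (1 / r) * s $ i) = 1"
    using s assms by (simp add: scaled_simplex_def flip: sum_divide_distrib)
  then have "(1 / r) *\<^sub>R s \<in> std_simplex"
    using s assms by (simp add: scaled_simplex_def std_simplex_def)
  moreover have "s = r *\<^sub>R ((1 / r) *\<^sub>R s)"
    using assms by simp
  ultimately show "s \<in> (*\<^sub>R) r ` std_simplex"
    by blast
next
  fix s :: "real^'m" assume "s \<in> (*\<^sub>R) r ` std_simplex"
  then obtain v where "v \<in> std_simplex" "s = r *\<^sub>R v"
    by blast
  then show "s \<in> scaled_simplex r"
    using assms by (simp add: scaled_simplex_def std_simplex_def flip: sum_distrib_left)
qed

lemma sum_eq_other_component_neq: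
  fixes v w :: "real^'m::finite"
  assumes "(\<Sum>k\<in>UNIV. v $ k) = (\<Sum>k\<in>UNIV. w $ k)" "v $ i \<noteq> w $ i"
  obtains j where "j \<noteq> i" "v $ j \<noteq> w $ j"
proof (rule ccontr)
  assume "\<not> thesis"
  with that have "(\<Sum>k\<in>UNIV - {i}. v $ k) = (\<Sum>k\<in>UNIV - {i}. w $ k)"
    by (intro sum.cong) auto
  then show False
    using assms sum.remove[of UNIV i "\<lambda>k. v $ k"] sum.remove[of UNIV i "\<lambda>k. w $ k"] by simp
qed

lemma concave_on_coordinate_sum:
  fixes h :: "'m::finite \<Rightarrow> real \<Rightarrow> real"
  assumes S: "convex S" "\<And>s i. s \<in> S \<Longrightarrow> 0 \<le> s $ i"
    and conc: "\<And>i. concave_on {0..} (h i)"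
  shows "concave_on S (\<lambda>s. \<Sum>i\<in>UNIV. h i (s $ i))"
  unfolding concave_on_iff
proof (intro conjI ballI allI impI)
  fix s s' :: "real^'m" and a b :: real
  assume "s \<in> S" "s' \<in> S" "0 \<le> a" "0 \<le> b" "a + b = 1"
  then show "a * (\<Sum>i\<in>UNIV. h i (s $ i)) + b * (\<Sum>i\<in>UNIV. h i (s' $ i))
      \<le> (\<Sum>i\<in>UNIV. h i ((a *\<^sub>R s + b *\<^sub>R s') $ i))"
    unfolding sum_distrib_left sum.distrib[symmetric]
  proof (intro sum_mono)
    fix i
    have "0 \<le> s $ i" "0 \<le> s' $ i"
      using S(2) \<open>s \<in> S\<close> \<open>s' \<in> S\<close> by auto
    then show "a * h i (s $ i) + b * h i (s' $ i) \<le> h i ((a *\<^sub>R s + b *\<^sub>R s') $ i)"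
      using conc[of i] \<open>0 \<le> a\<close> \<open>0 \<le> b\<close> \<open>a + b = 1\<close> by (simp add: concave_on_iff)
  qed
qed (rule S(1))

lemma strict_concave_on_coordinate_sum:
  fixes h :: "'m::finite \<Rightarrow> real \<Rightarrow> real"
  assumes conc: "\<And>i. concave_on {0..} (h i)"
    and nonstrict: "card {i. \<not> strict_concave_on {0..} (h i)} \<le> 1"
  shows "strict_concave_on (scaled_simplex a) (\<lambda>s. \<Sum>i\<in>UNIV. h i (s $ i))"
proof (rule strict_concave_onI)
  show "convex (scaled_simplex a)"
    by (rule convex_scaled_simplex)
  fix s s' :: "real^'m" and t :: real
  assume s: "s \<in> scaled_simplex a" "s' \<in> scaled_simplex a" "s \<noteq> s'" and t: "0 < t" "t < 1"
  have nonneg: "0 \<le> s $ i" "0 \<le> s' $ i" for i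
    using s by (auto simp: scaled_simplex_def)
  obtain i where i: "s $ i \<noteq> s' $ i"
    using s(3) by (auto simp: vec_eq_iff)
  moreover obtain j where j: "j \<noteq> i" "s $ j \<noteq> s' $ j"
    using sum_eq_other_component_neq[OF _ i] s by (auto simp: scaled_simplex_def)
  moreover have "strict_concave_on {0..} (h i) \<or> strict_concave_on {0..} (h j)"
  proof (rule ccontr)
    assume "\<not> ?thesis"
    then have "card {i, j} \<le> card {i. \<not> strict_concave_on {0..} (h i)}"
      by (intro card_mono) auto
    then show False
      using nonstrict j(1) by simp
  qed
  ultimately obtain k where k: "strict_concave_on {0..} (h k)" "s $ k \<noteq> s' $ k"
    by blast
  show "(1 - t) * (\<Sum>i\<in>UNIV. h i (s $ i)) + t * (\<Sum>i\<in>UNIV. h i (s' $ i))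
      < (\<Sum>i\<in>UNIV. h i (((1 - t) *\<^sub>R s + t *\<^sub>R s') $ i))"
    unfolding sum_distrib_left sum.distrib[symmetric]
  proof (rule sum_strict_mono_ex1)
    show "\<forall>i\<in>UNIV. (1 - t) * h i (s $ i) + t * h i (s' $ i)
        \<le> h i (((1 - t) *\<^sub>R s + t *\<^sub>R s') $ i)"
      using concave_onD[OF conc] nonneg t by simp
    show "\<exists>i\<in>UNIV. (1 - t) * h i (s $ i) + t * h i (s' $ i)
        < h i (((1 - t) *\<^sub>R s + t *\<^sub>R s') $ i)"
      using strict_concave_onD[OF k(1) _ _ k(2) t] nonneg by auto
  qed simp
qed

theorem proposition4:
  fixes n :: nat
    and u :: "'m::finite \<Rightarrow> real \<Rightarrow> real"
    and c :: "real^'m \<Rightarrow> real"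
  assumes n_ge: "n \<ge> 1"
    and u_nonneg: "\<And>x t. t \<ge> 0 \<Longrightarrow> u x t \<ge> 0"
    and u_zero: "\<And>x. u x 0 = 0"
    and c_nonneg: "\<And>v. v \<in> std_simplex \<Longrightarrow> c v \<ge> 0"
    and u_concave: "\<And>x. concave_on {0..} (u x)"
    and u_diff: "\<And>x. u x differentiable_on {0..}"
    and c_convex: "convex_on std_simplex c"
    and c_diff: "c differentiable_on std_simplex"
    and strict: "card {x. \<not> strict_concave_on {0..} (u x)} \<le> 1
                 \<or> strict_convex_on std_simplex c"
  shows "strict_concave_on (scaled_simplex (real n)) (potential n u c)"
proof -
  define U where "U s = (\<Sum>x\<in>UNIV. coordinate_potential n (u x) (s $ x))" for s :: "real^'m"
  define C where "C s = - (real n * c ((1 / real n) *\<^sub>R s))" for s :: "real^'m"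
  have n_pos: "0 < real n"
    using n_ge by simp
  have u_diff_0: "u x differentiable (at 0 within {0..})" for x
    using u_diff by (simp add: differentiable_on_def)
  have simplex: "scaled_simplex (real n) = (*\<^sub>R) (real n) ` (std_simplex :: (real^'m) set)"
    using n_pos by (rule scaled_simplex_eq_scaleR_std_simplex)
  have U_concave: "concave_on (scaled_simplex (real n)) U"
    unfolding U_def using concave_on_coordinate_potential[OF n_ge u_concave u_zero u_diff_0]
    by (intro concave_on_coordinate_sum convex_scaled_simplex) (auto simp: scaled_simplex_def)
  moreover have C_concave: "concave_on (scaled_simplex (real n)) C"
    unfolding C_def simplex using convex_on_rescale[OF c_convex n_pos] by (simp add: concave_on_def)
  moreover have "strict_concave_on (scaled_simplex (real n)) U
      \<or> strict_concave_on (scaled_simplex (real n)) C"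
    using strict
  proof
    assume "card {x. \<not> strict_concave_on {0..} (u x)} \<le> 1"
    moreover have "{x. \<not> strict_concave_on {0..} (coordinate_potential n (u x))}
        \<subseteq> {x. \<not> strict_concave_on {0..} (u x)}"
      using strict_concave_on_coordinate_potential[OF n_ge u_concave u_zero u_diff_0] by blast
    ultimately have "card {x. \<not> strict_concave_on {0..} (coordinate_potential n (u x))} \<le> 1"
      by (meson card_mono finite order_trans)
    then show ?thesis
      unfolding U_def
      using concave_on_coordinate_potential[OF n_ge u_concave u_zero u_diff_0]
      by (intro disjI1 strict_concave_on_coordinate_sum)
  next
    assume "strict_convex_on std_simplex c"
    then have "strict_convex_on (scaled_simplex (real n)) (\<lambda>s. real n * c ((1 / real n) *\<^sub>R s))"
      unfolding simplex using n_pos by (rule strict_convex_on_rescale)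
    then show ?thesis
      unfolding C_def by (simp add: strict_concave_on_def)
  qed
  ultimately show ?thesis
    unfolding potential_eq_coordinate_potential U_def[symmetric] C_def[symmetric]
    by (rule strict_concave_on_add)
qed

end
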